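(* In the directed polymer on a disordered $d$-ary tree with non-disordered defect subtree described in the context, fix $\beta>0$ and let $t\in(0,1)$ satisfy \[\Big(\frac{\Theta(\beta)}{d^2e^{2\lambda(\beta)}}\Big)^{1-t}<d_1^{\,t}.\] Then for every $u\in\mathbb{R}$, \[\liminf_{n\to\infty}\frac1n\log Z^{ST}_n(\beta,u)\geq(\lambda(\beta)+\log d)(1-t)+(\beta u+\log d_1)t\quad\text{a.s.}\]
   Context: Let $d\geq2$, $1\leq d_1<d$. $\mathbb{T}$ is the rooted $d$-ary tree with nodes $(k,j)$ ($k$ the generation, root $\mathbf 0=(0,1)$, children of $(k,j)$ are $(k+1,(j-1)d+\ell)$, $1\le\ell\le d$). $\tilde{\mathbb{T}}$ is the left-most $d_1$-regular subtree: it contains the root and, for $x=(k,j)\in\tilde{\mathbb{T}}$, the children $(k+1,d(j-1)+\ell)$, $1\le\ell\le d_1$. Let $V$ be a non-degenerate real random variable with $\lambda(\beta):=\log\mathbf{E}[e^{\beta V}]<\infty$ for all real $\beta$. Set $V(x)=u$ for $x\in\tilde{\mathbb{T}}$ and let $V(x)$, $x\in\mathbb{T}\setminus\tilde{\mathbb{T}}$, be i.i.d. copies of $V$. $Z^{ST}_n(\beta,u)=\sum_W\exp(\beta\sum_{y\in W\setminus\{\mathbf 0\}}V(y))$ over all directed paths $W$ from $\mathbf 0$ to generation $n$. $\Theta(\beta):=\max\{d^2e^{2\lambda(\beta)},\ de^{\lambda(2\beta)}\}$; equivalently, $\Theta(\beta)=\lim_n(\mathrm{Var}(e^{\beta V^*}Z^{HD}_n(\beta)))^{1/n}$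 where $Z^{HD}_n(\beta)$ is the partition function of the $d$-ary tree with i.i.d. copies of $V$ at all vertices and $V^*$ is an independent copy of $V$. *)

theory Defs
  imports "HOL-Probability.Probability"
begin

text \<open>Nodes are pairs (k, j): generation k, position j (1-based).
  The full d-ary tree, and the left-most d1-regular subtree (defect subtree).\<close>

inductive_set dary_tree :: "nat \<Rightarrow> (nat \<times> nat) set" for d :: nat where
  root: "(0, 1) \<in> dary_tree d"
| child: "(k, j) \<in> dary_tree d \<Longrightarrow> 1 \<le> l \<Longrightarrow> l \<le> d \<Longrightarrow>
            (Suc k, (j - 1) * d + l) \<in> dary_tree d"

inductive_set defect_tree :: "nat \<Rightarrow> nat \<Rightarrow> (nat \<times> nat) set" for d d1 :: nat where
  root: "(0, 1) \<in> defect_tree d d1"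
| child: "(k, j) \<in> defect_tree d d1 \<Longrightarrow> 1 \<le> l \<Longrightarrow> l \<le> d1 \<Longrightarrow>
            (Suc k, (j - 1) * d + l) \<in> defect_tree d d1"

text \<open>A directed path from the root to generation n is encoded by the list of
  child labels l_1, ..., l_n in {1..d}; its node in generation k is
  (k, path_pos d (take k ls)).\<close>

definition path_pos :: "nat \<Rightarrow> nat list \<Rightarrow> nat" where
  "path_pos d ls = foldl (\<lambda>j l. (j - 1) * d + l) 1 ls"

definition paths :: "nat \<Rightarrow> nat \<Rightarrow> nat list set" where
  "paths d n = {ls. length ls = n \<and> set ls \<subseteq> {1..d}}"

definition env :: "nat \<Rightarrow> nat \<Rightarrow> real \<Rightarrow> (nat \<times> nat \<Rightarrow> 'a \<Rightarrow> real) \<Rightarrow> nat \<times> nat \<Rightarrow> 'a \<Rightarrow> real" where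
  "env d d1 u X x \<omega> = (if x \<in> defect_tree d d1 then u else X x \<omega>)"

definition Z_ST :: "nat \<Rightarrow> nat \<Rightarrow> (nat \<times> nat \<Rightarrow> 'a \<Rightarrow> real) \<Rightarrow> real \<Rightarrow> real \<Rightarrow> nat \<Rightarrow> 'a \<Rightarrow> real" where
  "Z_ST d d1 X \<beta> u n \<omega> =
     (\<Sum>ls\<in>paths d n. exp (\<beta> * (\<Sum>k\<in>{1..n}. env d d1 u X (k, path_pos d (take k ls)) \<omega>)))"

definition lam :: "'a measure \<Rightarrow> ('a \<Rightarrow> real) \<Rightarrow> real \<Rightarrow> real" where
  "lam M V \<beta> = ln (integral\<^sup>L M (\<lambda>\<omega>. exp (\<beta> * V \<omega>)))"

definition Theta :: "'a measure \<Rightarrow> ('a \<Rightarrow> real) \<Rightarrow> nat \<Rightarrow> real \<Rightarrow> real" where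
  "Theta M V d \<beta> = max ((real d)^2 * exp (2 * lam M V \<beta>)) (real d * exp (lam M V (2 * \<beta>)))"

end

theory Submission
  imports Defs "HOL-Library.Sublist"
begin

text \<open>Fix k \<approx> t n and m = n - k - 1, and keep only the d1^k d^m paths that follow the
  defect subtree for k generations, step to the d-th child (which leaves the subtree because
  d1 < d) and continue freely for m generations. They contribute e^(\<beta> u k) S to Z_n, where S is
  a sum of weights over disordered vertices only, with mean d1^k d^m e^((m+1) \<lambda>(\<beta>)). Two such
  paths share exactly the disordered vertices on their common prefix beyond generation k, so
  counting common prefixes bounds Var S, and Chebyshev gives
  P(S \<le> E S / 2) \<le> 4 \<rho> (m+1) (\<Theta>(\<beta>) / (d^2 e^(2\<lambda>(\<beta>))))^m / d1^k with
  \<rho> = e^(\<lambda>(2\<beta>) - 2\<lambda>(\<beta>)). The hypothesis makes this O(n q^n) with q < 1, so by Borel-Cantelli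
  S > E S / 2 eventually, almost surely, which is the claimed bound.\<close>

section \<open>Paths in the tree\<close>

lemma take_eq_iff_le_length_lcp:
  assumes "length p = length q" "j \<le> length p"
  shows "take j p = take j q \<longleftrightarrow> j \<le> length (longest_common_prefix p q)"
  using assms
proof (induction p q arbitrary: j rule: longest_common_prefix.induct)
  case (1 x xs y ys)
  then show ?case by (cases j) auto
qed auto

lemma length_lcp_le: "length (longest_common_prefix p q) \<le> length p"
  using longest_common_prefix_prefix1 prefix_length_le by blast

lemma longest_common_prefix_append_same:
  "longest_common_prefix (a @ c) (a @ c') = a @ longest_common_prefix c c'"
  by (induction a) auto

lemma length_lcp_append_less:
  "length a = length a' \<Longrightarrow> a \<noteq> a' \<Longrightarrow> length (longest_common_prefix (a @ c) (a' @ c')) < length a"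
proof (induction a arbitrary: a')
  case (Cons x a)
  then show ?case by (cases a') auto
qed simp

lemma paths_0: "paths d 0 = {[]}"
  by (auto simp: paths_def)

lemma paths_Suc: "paths d (Suc n) = (\<lambda>(l, b). l # b) ` ({1..d} \<times> paths d n)"
  by (auto simp: paths_def length_Suc_conv image_iff)

lemma finite_paths: "finite (paths d n)"
  by (induction n) (auto simp: paths_0 paths_Suc)

lemma card_paths: "card (paths d n) = d ^ n"
proof (induction n)
  case (Suc n)
  have "inj_on (\<lambda>(l, b). l # b) ({1..d} \<times> paths d n)"
    by (auto simp: inj_on_def)
  then show ?case
    by (simp add: paths_Suc card_image card_cartesian_product Suc)
qed (simp add: paths_0)

lemma paths_mono: "d1 \<le> d \<Longrightarrow> paths d1 n \<subseteq> paths d n"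
  by (auto simp: paths_def)

lemma take_in_paths: "ls \<in> paths d n \<Longrightarrow> j \<le> n \<Longrightarrow> take j ls \<in> paths d j"
  by (auto simp: paths_def dest: in_set_takeD)

lemma mult_add_less_eq_iff:
  fixes x y r s d :: nat
  assumes "r < d" "s < d"
  shows "x * d + r = y * d + s \<longleftrightarrow> x = y \<and> r = s"
proof
  assume e: "x * d + r = y * d + s"
  have "(x * d + r) div d = (y * d + s) div d" "(x * d + r) mod d = (y * d + s) mod d"
    using e by simp_all
  then show "x = y \<and> r = s"
    using assms by simp
qed simp

lemma path_pos_snoc: "path_pos d (ls @ [l]) = (path_pos d ls - 1) * d + l"
  by (simp add: path_pos_def)

lemma path_pos_pos: "set ls \<subseteq> {1..d} \<Longrightarrow> 0 < path_pos d ls"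
  by (induction ls rule: rev_induct) (auto simp: path_pos_snoc path_pos_def)

lemma inj_on_path_pos: "inj_on (path_pos d) (paths d n)"
proof -
  have "a = b" if "length a = length b" "set a \<subseteq> {1..d}" "set b \<subseteq> {1..d}"
    "path_pos d a = path_pos d b" for a b
    using that
  proof (induction a arbitrary: b rule: rev_induct)
    case (snoc l a)
    obtain b' l' where b: "b = b' @ [l']"
      using snoc.prems(1) by (cases b rule: rev_cases) auto
    have l: "1 \<le> l" "l \<le> d" "1 \<le> l'" "l' \<le> d"
      using snoc.prems b by auto
    have "(path_pos d a - 1) * d + (l - 1) = (path_pos d b' - 1) * d + (l' - 1)"
      using snoc.prems(4) l by (simp add: b path_pos_snoc)
    moreover have "l - 1 < d" "l' - 1 < d"
      using l by auto
    ultimately have "path_pos d a - 1 = path_pos d b' - 1 \<and> l - 1 = l' - 1"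
      using mult_add_less_eq_iff by blast
    moreover have "0 < path_pos d a" "0 < path_pos d b'"
      using path_pos_pos[of a d] path_pos_pos[of b' d] snoc.prems b by auto
    ultimately show ?case
      using snoc b l by auto
  qed simp
  then show ?thesis
    by (auto simp: inj_on_def paths_def)
qed

lemma path_node_in_dary_tree: "ls \<in> paths d k \<Longrightarrow> (k, path_pos d ls) \<in> dary_tree d"
proof (induction ls arbitrary: k rule: rev_induct)
  case Nil
  then have "k = 0" by (simp add: paths_def)
  then show ?case using dary_tree.root by (simp add: path_pos_def)
next
  case (snoc l ls)
  then show ?case
    using dary_tree.child[of "length ls" "path_pos d ls" d l]
    by (auto simp: paths_def path_pos_snoc)
qed

lemma mem_defect_tree_iff:
  "(k, j) \<in> defect_tree d d1 \<longleftrightarrow> (\<exists>ls \<in> paths d1 k. j = path_pos d ls)"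
proof
  assume "(k, j) \<in> defect_tree d d1"
  then show "\<exists>ls \<in> paths d1 k. j = path_pos d ls"
  proof (induction k j rule: defect_tree.induct)
    case root
    then show ?case by (auto simp: paths_0 path_pos_def)
  next
    case (child k j l)
    then obtain ls where "ls \<in> paths d1 k" "j = path_pos d ls" by auto
    then show ?case
      using child by (intro bexI[of _ "ls @ [l]"]) (auto simp: paths_def path_pos_snoc)
  qed
next
  assume "\<exists>ls \<in> paths d1 k. j = path_pos d ls"
  then obtain ls where "ls \<in> paths d1 k" "j = path_pos d ls" by blast
  then show "(k, j) \<in> defect_tree d d1"
  proof (induction ls arbitrary: k j rule: rev_induct)
    case Nil
    then show ?case using defect_tree.root by (simp add: paths_def path_pos_def)
  next
    case (snoc l ls)
    then show ?case
      using defect_tree.child[of "length ls" "path_pos d ls" d d1 l]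
      by (auto simp: paths_def path_pos_snoc)
  qed
qed

lemma path_node_notin_defect_tree:
  assumes "d1 \<le> d" "ls \<in> paths d k" "l \<in> set ls" "d1 < l"
  shows "(k, path_pos d ls) \<notin> defect_tree d d1"
proof
  assume "(k, path_pos d ls) \<in> defect_tree d d1"
  then obtain ls' where ls': "ls' \<in> paths d1 k" "path_pos d ls = path_pos d ls'"
    by (auto simp: mem_defect_tree_iff)
  then have "ls = ls'"
    using inj_on_path_pos paths_mono[OF assms(1)] assms(2) by (blast dest: inj_onD)
  then show False
    using ls'(1) assms(3,4) by (auto simp: paths_def)
qed

section \<open>Overlap sums and asymptotic estimates\<close>

lemma sum_pairs_if_fst_eq:
  fixes h :: "'b \<Rightarrow> 'b \<Rightarrow> real"
  assumes "finite A"
  shows "(\<Sum>(a, b)\<in>A \<times> B. \<Sum>(a', b')\<in>A \<times> B. if a = a' then h b b' else 0)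
    = card A * (\<Sum>b\<in>B. \<Sum>b'\<in>B. h b b')"
proof -
  have inner: "(\<Sum>(a', b')\<in>A \<times> B. if a = a' then h b b' else 0) = (\<Sum>b'\<in>B. h b b')"
    if "a \<in> A" for a b
  proof -
    have "(\<Sum>(a', b')\<in>A \<times> B. if a = a' then h b b' else 0)
        = (\<Sum>a'\<in>A. \<Sum>b'\<in>B. if a = a' then h b b' else 0)"
      by (rule sum.cartesian_product[symmetric])
    also have "\<dots> = (\<Sum>a'\<in>A. if a = a' then \<Sum>b'\<in>B. h b b' else 0)"
      by (intro sum.cong) auto
    also have "\<dots> = (\<Sum>b'\<in>B. h b b')"
      using assms that by simp
    finally show ?thesis .
  qed
  have "(\<Sum>(a, b)\<in>A \<times> B. \<Sum>(a', b')\<in>A \<times> B. if a = a' then h b b' else 0)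
      = (\<Sum>(a, b)\<in>A \<times> B. \<Sum>b'\<in>B. h b b')"
    by (intro sum.cong) (auto simp: inner)
  then show ?thesis
    by (simp add: sum.cartesian_product[symmetric])
qed

definition overlap_sum :: "nat \<Rightarrow> nat \<Rightarrow> real \<Rightarrow> real" where
  "overlap_sum d m \<rho> = (\<Sum>b\<in>paths d m. \<Sum>b'\<in>paths d m. \<rho> ^ length (longest_common_prefix b b'))"

lemma overlap_sum_nonneg: "0 \<le> \<rho> \<Longrightarrow> 0 \<le> overlap_sum d m \<rho>"
  unfolding overlap_sum_def by (intro sum_nonneg) auto

lemma overlap_sum_Suc_le:
  assumes "0 \<le> \<rho>"
  shows "overlap_sum d (Suc m) \<rho> \<le> real d * \<rho> * overlap_sum d m \<rho> + (real d ^ 2) ^ Suc m"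
proof -
  let ?cons = "\<lambda>(l::nat, b). l # b"
  let ?A = "{1..d} \<times> paths d m"
  let ?h = "\<lambda>b b'. \<rho> * \<rho> ^ length (longest_common_prefix b b')"
  have inj: "inj_on ?cons ?A"
    by (auto simp: inj_on_def)
  have "overlap_sum d (Suc m) \<rho>
      = (\<Sum>x\<in>?A. \<Sum>y\<in>?A. \<rho> ^ length (longest_common_prefix (?cons x) (?cons y)))"
    unfolding overlap_sum_def paths_Suc by (simp only: sum.reindex[OF inj] comp_def)
  also have "\<dots> \<le> (\<Sum>x\<in>?A. \<Sum>y\<in>?A.
      (case x of (l, b) \<Rightarrow> case y of (l', b') \<Rightarrow> if l = l' then ?h b b' else 0) + 1)"
    using assms by (intro sum_mono) auto
  also have "\<dots> = real d * (\<Sum>b\<in>paths d m. \<Sum>b'\<in>paths d m. ?h b b') + real (card ?A) ^ 2"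
    using sum_pairs_if_fst_eq[where A="{1..d}" and B="paths d m" and h = "?h"]
    by (simp add: sum.distrib case_prod_unfold power2_eq_square)
  also have "\<dots> = real d * \<rho> * overlap_sum d m \<rho> + (real d ^ 2) ^ Suc m"
    by (simp add: overlap_sum_def sum_distrib_left card_cartesian_product card_paths
        power_mult_distrib power_mult[symmetric] mult.assoc mult.commute[of m 2])
  finally show ?thesis .
qed

lemma overlap_sum_le:
  assumes "0 \<le> \<rho>"
  shows "overlap_sum d m \<rho> \<le> real (Suc m) * max (real d * \<rho>) (real d ^ 2) ^ m"
proof (induction m)
  case 0
  then show ?case by (simp add: overlap_sum_def paths_0)
next
  case (Suc m)
  let ?T = "max (real d * \<rho>) (real d ^ 2)"
  have "overlap_sum d (Suc m) \<rho> \<le> real d * \<rho> * overlap_sum d m \<rho> + (real d ^ 2) ^ Suc m"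
    using assms by (rule overlap_sum_Suc_le)
  also have "\<dots> \<le> ?T * (real (Suc m) * ?T ^ m) + ?T ^ Suc m"
    using Suc assms overlap_sum_nonneg[OF assms] zero_le_power2[of "real d"]
    by (intro add_mono mult_mono power_mono) (auto simp: le_max_iff_disj)
  also have "\<dots> = real (Suc (Suc m)) * ?T ^ Suc m"
    by (simp add: algebra_simps)
  finally show ?case .
qed

lemma summable_of_nat_mult_power:
  fixes q :: real
  assumes "0 \<le> q" "q < 1"
  shows "summable (\<lambda>n. real n * q ^ n)"
proof (rule summable_ratio_test)
  show "(1 + q) / 2 < 1"
    using assms by simp
  fix n :: nat
  assume "n \<ge> nat \<lceil>2 / (1 - q)\<rceil>"
  then have "real n \<ge> 2 / (1 - q)"
    by linarith
  then have "real n * (1 - q) \<ge> 2"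
    using assms by (simp add: field_simps)
  then have "(real n + 1) * q \<le> (1 + q) / 2 * real n"
    using assms by (simp add: field_simps)
  then have "(real n + 1) * q * q ^ n \<le> (1 + q) / 2 * real n * q ^ n"
    using assms by (intro mult_right_mono) auto
  then show "norm (real (Suc n) * q ^ Suc n) \<le> (1 + q) / 2 * norm (real n * q ^ n)"
    using assms by (simp add: algebra_simps)
qed

lemma LIMSEQ_nat_floor_mult_div:
  fixes t :: real
  assumes "0 \<le> t"
  shows "(\<lambda>n. real (nat \<lfloor>t * real n\<rfloor>) / real n) \<longlonglongrightarrow> t"
proof (rule tendsto_sandwich)
  show "\<forall>\<^sub>F n in sequentially. t - 1 / real n \<le> real (nat \<lfloor>t * real n\<rfloor>) / real n"
    using eventually_gt_at_top[of "0::nat"]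
  proof eventually_elim
    case (elim n)
    have "t * real n - 1 \<le> real (nat \<lfloor>t * real n\<rfloor>)"
      using assms by linarith
    then have "(t * real n - 1) / real n \<le> real (nat \<lfloor>t * real n\<rfloor>) / real n"
      by (rule divide_right_mono) simp
    then show ?case
      using elim by (simp add: diff_divide_distrib)
  qed
  show "\<forall>\<^sub>F n in sequentially. real (nat \<lfloor>t * real n\<rfloor>) / real n \<le> t"
    using eventually_gt_at_top[of "0::nat"]
  proof eventually_elim
    case (elim n)
    then show ?case
      using of_nat_floor[of "t * real n"] assms by (simp add: field_simps)
  qed
  show "(\<lambda>n. t - 1 / real n) \<longlonglongrightarrow> t"
    using tendsto_diff[OF tendsto_const lim_const_over_n[of "1::real"]] by simp
qed simp

lemma power_split_ratio:
  fixes L P :: real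
  assumes "L \<noteq> 0" "g \<le> M"
  shows "P ^ g * L ^ (2 * (M - g)) = L ^ (2 * M) * (P / L\<^sup>2) ^ g"
proof -
  have "2 * M = 2 * g + 2 * (M - g)"
    using assms(2) by simp
  then have "L ^ (2 * M) = (L\<^sup>2) ^ g * L ^ (2 * (M - g))"
    by (metis power_add power_mult)
  then show ?thesis
    using assms(1) by (simp add: power_divide)
qed

lemma escape_bound_le_geometric:
  fixes r c t :: real
  assumes "1 \<le> r" "1 \<le> c" "k + Suc m = n" "t * real n - 1 \<le> real k"
  shows "real (Suc m) * r ^ m / c ^ k \<le> c * (real n * (r powr (1 - t) / c powr t) ^ n)"
proof -
  have "real (Suc m) \<le> real n"
    using assms(3) by simp
  moreover have "r ^ m \<le> r powr ((1 - t) * real n)"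
    using assms by (simp flip: powr_realpow) (intro powr_mono, auto simp: algebra_simps)
  moreover have "c powr (t * real n) / c \<le> c ^ k"
  proof -
    have "c powr (t * real n) / c = c powr (t * real n - 1)"
      using assms(2) by (simp add: powr_diff)
    also have "\<dots> \<le> c powr real k"
      using assms by (intro powr_mono) auto
    finally show ?thesis
      using assms(2) by (simp add: powr_realpow)
  qed
  ultimately have "real (Suc m) * r ^ m / c ^ k \<le> real n * r powr ((1 - t) * real n) / (c powr (t * real n) / c)"
    using assms(1,2) by (intro frac_le mult_mono) auto
  also have "\<dots> = c * (real n * (r powr (1 - t) / c powr t) ^ n)"
  proof -
    have "(r powr (1 - t) / c powr t) ^ n = r powr ((1 - t) * real n) / c powr (t * real n)"
      unfolding power_divide using assms(1,2) by (simp add: powr_power mult.commute)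
    then show ?thesis
      using assms(2) by (simp add: field_simps)
  qed
  finally show ?thesis .
qed

section \<open>Second moment method along escaping paths\<close>

locale defect_polymer = prob_space M for M :: "'a measure" +
  fixes V :: "'a \<Rightarrow> real" and X :: "nat \<times> nat \<Rightarrow> 'a \<Rightarrow> real" and d d1 :: nat and \<beta> :: real
  assumes d_ge_2: "2 \<le> d" and d1_pos: "1 \<le> d1" and d1_less_d: "d1 < d"
    and V_measurable: "V \<in> borel_measurable M"
    and integrable_exp_V: "\<And>b. integrable M (\<lambda>\<omega>. exp (b * V \<omega>))"
    and indep_X: "indep_vars (\<lambda>_. borel) X (dary_tree d - defect_tree d d1)"
    and distr_X: "\<And>x. x \<in> dary_tree d - defect_tree d d1 \<Longrightarrow>
      distr M borel (X x) = distr M borel V"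
begin

abbreviation disordered :: "(nat \<times> nat) set" where
  "disordered \<equiv> dary_tree d - defect_tree d d1"

definition mgf :: "real \<Rightarrow> real" where
  "mgf c = (\<integral>\<omega>. exp (c * V \<omega>) \<partial>M)"

lemma mgf_pos: "0 < mgf c"
proof -
  have "0 \<le> mgf c"
    unfolding mgf_def by (rule integral_nonneg_AE) simp
  moreover have "mgf c \<noteq> 0"
  proof
    assume "mgf c = 0"
    then have "AE \<omega> in M. exp (c * V \<omega>) = 0"
      using integral_nonneg_eq_0_iff_AE[OF integrable_exp_V] unfolding mgf_def by simp
    then show False
      by simp
  qed
  ultimately show ?thesis
    by simp
qed

lemma X_measurable: "x \<in> disordered \<Longrightarrow> X x \<in> borel_measurable M"
  using indep_X unfolding indep_vars_def by auto

lemma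
  assumes "x \<in> disordered"
  shows integrable_exp_X: "integrable M (\<lambda>\<omega>. exp (c * X x \<omega>))"
    and integral_exp_X: "(\<integral>\<omega>. exp (c * X x \<omega>) \<partial>M) = mgf c"
proof -
  have X: "X x \<in> borel_measurable M"
    using X_measurable assms .
  have exp: "(\<lambda>y::real. exp (c * y)) \<in> borel_measurable borel"
    by measurable
  show "integrable M (\<lambda>\<omega>. exp (c * X x \<omega>))"
    using integrable_distr_eq[OF X exp] integrable_distr_eq[OF V_measurable exp]
      integrable_exp_V distr_X[OF assms] by simp
  show "(\<integral>\<omega>. exp (c * X x \<omega>) \<partial>M) = mgf c"
    using integral_distr[OF X exp] integral_distr[OF V_measurable exp] distr_X[OF assms]
    by (simp add: mgf_def)
qed

lemma
  assumes "finite C" "C \<subseteq> disordered"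
  shows integrable_prod_exp_X: "integrable M (\<lambda>\<omega>. \<Prod>x\<in>C. exp (c x * X x \<omega>))"
    and integral_prod_exp_X:
      "(\<integral>\<omega>. (\<Prod>x\<in>C. exp (c x * X x \<omega>)) \<partial>M) = (\<Prod>x\<in>C. mgf (c x))"
proof -
  have "indep_vars (\<lambda>_. borel) (\<lambda>x \<omega>. exp (c x * X x \<omega>)) disordered"
    by (rule indep_vars_compose2[OF indep_X]) measurable
  then have indep: "indep_vars (\<lambda>_. borel) (\<lambda>x \<omega>. exp (c x * X x \<omega>)) C"
    using indep_vars_subset assms(2) by blast
  have int: "\<And>x. x \<in> C \<Longrightarrow> integrable M (\<lambda>\<omega>. exp (c x * X x \<omega>))"
    using integrable_exp_X assms(2) by blast
  show "integrable M (\<lambda>\<omega>. \<Prod>x\<in>C. exp (c x * X x \<omega>))"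
    using indep_vars_integrable[OF assms(1) indep int] by simp
  have "(\<integral>\<omega>. (\<Prod>x\<in>C. exp (c x * X x \<omega>)) \<partial>M)
      = (\<Prod>x\<in>C. \<integral>\<omega>. exp (c x * X x \<omega>) \<partial>M)"
    using indep_vars_lebesgue_integral[OF assms(1) indep int] by simp
  also have "\<dots> = (\<Prod>x\<in>C. mgf (c x))"
    using integral_exp_X assms(2) by (intro prod.cong) auto
  finally show "(\<integral>\<omega>. (\<Prod>x\<in>C. exp (c x * X x \<omega>)) \<partial>M)
      = (\<Prod>x\<in>C. mgf (c x))" .
qed

text \<open>The label d selects the d-th child, which lies outside the defect subtree since d1 < d.\<close>

definition escape_paths :: "nat \<Rightarrow> nat \<Rightarrow> nat list set" where
  "escape_paths k m = (\<lambda>(a, b). a @ d # b) ` (paths d1 k \<times> paths d m)"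

definition path_node :: "nat list \<Rightarrow> nat \<Rightarrow> nat \<times> nat" where
  "path_node p j = (j, path_pos d (take j p))"

definition free_gens :: "nat \<Rightarrow> nat \<Rightarrow> nat set" where
  "free_gens k m = {Suc k..k + Suc m}"

definition path_weight :: "nat \<Rightarrow> nat \<Rightarrow> nat list \<Rightarrow> 'a \<Rightarrow> real" where
  "path_weight k m p \<omega> = exp (\<beta> * (\<Sum>j\<in>free_gens k m. X (path_node p j) \<omega>))"

definition escape_sum :: "nat \<Rightarrow> nat \<Rightarrow> 'a \<Rightarrow> real" where
  "escape_sum k m \<omega> = (\<Sum>p\<in>escape_paths k m. path_weight k m p \<omega>)"

lemma inj_on_escape_paths: "inj_on (\<lambda>(a, b). a @ d # b) (paths d1 k \<times> paths d m)"
  by (auto simp: inj_on_def paths_def)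

lemma card_escape_paths: "card (escape_paths k m) = d1 ^ k * d ^ m"
  unfolding escape_paths_def using inj_on_escape_paths
  by (simp add: card_image card_cartesian_product card_paths)

lemma escape_pathsE:
  assumes "p \<in> escape_paths k m"
  obtains a b where "p = a @ d # b" "a \<in> paths d1 k" "b \<in> paths d m"
  using assms unfolding escape_paths_def by auto

lemma escape_paths_subset: "escape_paths k m \<subseteq> paths d (k + Suc m)"
  using d1_less_d d_ge_2 by (fastforce elim!: escape_pathsE simp: paths_def subset_iff)

lemma path_node_disordered:
  assumes p: "p \<in> escape_paths k m" and j: "j \<in> free_gens k m"
  shows "path_node p j \<in> disordered"
proof -
  obtain a b where ab: "p = a @ d # b" "a \<in> paths d1 k"
    using p by (rule escape_pathsE)
  have "k < j" "j \<le> k + Suc m"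
    using j by (auto simp: free_gens_def)
  then have "take j p \<in> paths d j"
    using take_in_paths escape_paths_subset p by blast
  moreover have "d \<in> set (take j p)"
    using ab \<open>k < j\<close> by (auto simp: paths_def take_append take_Cons')
  ultimately show ?thesis
    using path_node_in_dary_tree path_node_notin_defect_tree[of d1 d _ j d] d1_less_d
    by (auto simp: path_node_def)
qed

lemma path_node_defect:
  assumes "p \<in> escape_paths k m" "j \<le> k"
  shows "path_node p j \<in> defect_tree d d1"
proof -
  obtain a b where "p = a @ d # b" "a \<in> paths d1 k"
    using assms(1) by (rule escape_pathsE)
  then have "take j p \<in> paths d1 j" "take j p = take j a"
    using assms(2) take_in_paths by (auto simp: paths_def)
  then show ?thesis
    by (auto simp: path_node_def mem_defect_tree_iff)
qed

lemma inj_on_path_node: "inj_on (path_node p) A"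
  by (auto simp: inj_on_def path_node_def)

lemma path_weight_eq_prod:
  "path_weight k m p \<omega> = (\<Prod>x\<in>path_node p ` free_gens k m. exp (\<beta> * X x \<omega>))"
proof -
  have "path_weight k m p \<omega> = (\<Prod>j\<in>free_gens k m. exp (\<beta> * X (path_node p j) \<omega>))"
    unfolding path_weight_def sum_distrib_left by (rule exp_sum) (simp add: free_gens_def)
  then show ?thesis
    by (simp add: prod.reindex[OF inj_on_path_node])
qed

lemma card_path_nodes: "card (path_node p ` free_gens k m) = Suc m"
  using card_image[OF inj_on_path_node] by (simp add: free_gens_def)

lemma
  assumes "p \<in> escape_paths k m"
  shows integrable_path_weight: "integrable M (path_weight k m p)"
    and integral_path_weight: "(\<integral>\<omega>. path_weight k m p \<omega> \<partial>M) = mgf \<beta> ^ Suc m"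
proof -
  have "finite (path_node p ` free_gens k m)" "path_node p ` free_gens k m \<subseteq> disordered"
    using path_node_disordered[OF assms] by (auto simp: free_gens_def)
  note prod = integrable_prod_exp_X[OF this] integral_prod_exp_X[OF this]
  show "integrable M (path_weight k m p)"
    using prod(1)[of "\<lambda>_. \<beta>"] by (simp add: path_weight_eq_prod[abs_def])
  show "(\<integral>\<omega>. path_weight k m p \<omega> \<partial>M) = mgf \<beta> ^ Suc m"
    using prod(2)[of "\<lambda>_. \<beta>"] by (simp add: path_weight_eq_prod card_path_nodes)
qed

lemma card_shared_path_nodes:
  assumes p: "p \<in> escape_paths k m" and q: "q \<in> escape_paths k m"
  shows "card (path_node p ` free_gens k m \<inter> path_node q ` free_gens k m)
    = length (longest_common_prefix p q) - k"
proof -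
  have pq: "p \<in> paths d (k + Suc m)" "q \<in> paths d (k + Suc m)"
    using p q escape_paths_subset by auto
  have "path_node p ` free_gens k m \<inter> path_node q ` free_gens k m
      = path_node p ` {j \<in> free_gens k m. take j p = take j q}"
  proof (intro set_eqI iffI)
    fix x
    assume "x \<in> path_node p ` free_gens k m \<inter> path_node q ` free_gens k m"
    then obtain j where j: "j \<in> free_gens k m" "x = path_node p j" "x = path_node q j"
      by (auto simp: path_node_def)
    then have "take j p \<in> paths d j" "take j q \<in> paths d j"
      using pq take_in_paths by (auto simp: free_gens_def)
    moreover have "path_pos d (take j p) = path_pos d (take j q)"
      using j by (simp add: path_node_def)
    ultimately have "take j p = take j q"
      using inj_on_path_pos by (blast dest: inj_onD)
    then show "x \<in> path_node p ` {j \<in> free_gens k m. take j p = take j q}"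
      using j by auto
  qed (auto simp: path_node_def)
  also have "{j \<in> free_gens k m. take j p = take j q} = {Suc k..length (longest_common_prefix p q)}"
    using take_eq_iff_le_length_lcp[of p q] length_lcp_le[of p q] pq
    by (auto simp: free_gens_def paths_def)
  finally show ?thesis
    by (simp add: card_image[OF inj_on_path_node])
qed

lemma
  assumes p: "p \<in> escape_paths k m" and q: "q \<in> escape_paths k m"
  defines "g \<equiv> length (longest_common_prefix p q) - k"
  shows integrable_path_weight_mult:
      "integrable M (\<lambda>\<omega>. path_weight k m p \<omega> * path_weight k m q \<omega>)"
    and integral_path_weight_mult: "(\<integral>\<omega>. path_weight k m p \<omega> * path_weight k m q \<omega> \<partial>M)
      = mgf (2 * \<beta>) ^ g * mgf \<beta> ^ (2 * (Suc m - g))"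
proof -
  define A where "A = path_node p ` free_gens k m"
  define B where "B = path_node q ` free_gens k m"
  define c where "c x = (if x \<in> A then \<beta> else 0) + (if x \<in> B then \<beta> else 0)" for x
  have fin: "finite A" "finite B"
    by (simp_all add: A_def B_def free_gens_def)
  have disordered: "A \<union> B \<subseteq> disordered"
    using path_node_disordered[OF p] path_node_disordered[OF q] by (auto simp: A_def B_def)
  have prod_eq:
    "path_weight k m p \<omega> * path_weight k m q \<omega> = (\<Prod>x\<in>A \<union> B. exp (c x * X x \<omega>))" for \<omega>
  proof -
    have "(\<Prod>x\<in>A \<union> B. exp (c x * X x \<omega>))
        = (\<Prod>x\<in>A \<union> B. (if x \<in> A then exp (\<beta> * X x \<omega>) else 1)
            * (if x \<in> B then exp (\<beta> * X x \<omega>) else 1))"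
      by (intro prod.cong) (auto simp: c_def distrib_right exp_add)
    also have "\<dots> = (\<Prod>x\<in>(A \<union> B) \<inter> A. exp (\<beta> * X x \<omega>))
        * (\<Prod>x\<in>(A \<union> B) \<inter> B. exp (\<beta> * X x \<omega>))"
      using fin by (simp add: prod.distrib prod.inter_restrict[symmetric])
    also have "\<dots> = path_weight k m p \<omega> * path_weight k m q \<omega>"
      by (simp add: path_weight_eq_prod A_def B_def Int_absorb1)
    finally show ?thesis by simp
  qed
  show "integrable M (\<lambda>\<omega>. path_weight k m p \<omega> * path_weight k m q \<omega>)"
    unfolding prod_eq using integrable_prod_exp_X[OF _ disordered] fin by simp
  have card_AB: "card (A \<inter> B) = g" "card A = Suc m" "card B = Suc m"
    using card_shared_path_nodes[OF p q] card_path_nodes by (simp_all add: A_def B_def g_def)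
  have card_symdiff: "card ((A \<union> B) - A \<inter> B) = 2 * (Suc m - g)"
    by (subst card_Diff_subset) (use fin card_Un_Int[OF fin] card_AB in auto)
  have "(\<integral>\<omega>. path_weight k m p \<omega> * path_weight k m q \<omega> \<partial>M) = (\<Prod>x\<in>A \<union> B. mgf (c x))"
    unfolding prod_eq using integral_prod_exp_X[OF _ disordered] fin by simp
  also have "\<dots> = (\<Prod>x\<in>(A \<union> B) - A \<inter> B. mgf (c x)) * (\<Prod>x\<in>A \<inter> B. mgf (c x))"
    by (rule prod.subset_diff) (use fin in auto)
  also have "(\<Prod>x\<in>(A \<union> B) - A \<inter> B. mgf (c x)) = (\<Prod>x\<in>(A \<union> B) - A \<inter> B. mgf \<beta>)"
    by (intro prod.cong) (auto simp: c_def)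
  also have "(\<Prod>x\<in>A \<inter> B. mgf (c x)) = (\<Prod>x\<in>A \<inter> B. mgf (2 * \<beta>))"
    by (intro prod.cong) (auto simp: c_def)
  finally show "(\<integral>\<omega>. path_weight k m p \<omega> * path_weight k m q \<omega> \<partial>M)
      = mgf (2 * \<beta>) ^ g * mgf \<beta> ^ (2 * (Suc m - g))"
    by (simp add: card_AB card_symdiff)
qed

lemma escape_overlap_sum_le:
  assumes "0 \<le> \<rho>"
  shows "(\<Sum>p\<in>escape_paths k m. \<Sum>q\<in>escape_paths k m.
      \<rho> ^ (length (longest_common_prefix p q) - k) - 1) \<le> real d1 ^ k * \<rho> * overlap_sum d m \<rho>"
proof -
  let ?f = "\<lambda>(a::nat list, b). a @ d # b"
  let ?A = "paths d1 k \<times> paths d m"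
  let ?h = "\<lambda>b b'. \<rho> * \<rho> ^ length (longest_common_prefix b b')"
  have "(\<Sum>p\<in>escape_paths k m. \<Sum>q\<in>escape_paths k m.
        \<rho> ^ (length (longest_common_prefix p q) - k) - 1)
      = (\<Sum>x\<in>?A. \<Sum>y\<in>?A. \<rho> ^ (length (longest_common_prefix (?f x) (?f y)) - k) - 1)"
    unfolding escape_paths_def by (simp only: sum.reindex[OF inj_on_escape_paths] comp_def)
  also have "\<dots> \<le> (\<Sum>x\<in>?A. \<Sum>y\<in>?A.
      (case x of (a, b) \<Rightarrow> case y of (a', b') \<Rightarrow> if a = a' then ?h b b' else 0))"
  proof (intro sum_mono)
    fix x y
    assume "x \<in> ?A" "y \<in> ?A"
    moreover obtain a b a' b' where xy: "x = (a, b)" "y = (a', b')"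
      by fastforce
    ultimately have "length a = k" "length a' = k"
      by (auto simp: paths_def)
    then show "\<rho> ^ (length (longest_common_prefix (?f x) (?f y)) - k) - 1
        \<le> (case x of (a, b) \<Rightarrow> case y of (a', b') \<Rightarrow> if a = a' then ?h b b' else 0)"
      using length_lcp_append_less[of a a' "d # b" "d # b'"] assms
      by (auto simp: xy longest_common_prefix_append_same)
  qed
  also have "\<dots> = real d1 ^ k * \<rho> * overlap_sum d m \<rho>"
    using sum_pairs_if_fst_eq[where A = "paths d1 k" and B = "paths d m" and h = "?h"] finite_paths
    by (simp add: case_prod_unfold card_paths overlap_sum_def sum_distrib_left mult.assoc)
  finally show ?thesis .
qed

lemma integrable_escape_sum: "integrable M (escape_sum k m)"
  unfolding escape_sum_def[abs_def] using integrable_path_weight by auto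

lemma escape_sum_measurable[measurable]: "escape_sum k m \<in> borel_measurable M"
  using integrable_escape_sum by (rule borel_measurable_integrable)

lemma escape_sum_power2:
  "escape_sum k m \<omega> ^ 2
    = (\<Sum>p\<in>escape_paths k m. \<Sum>q\<in>escape_paths k m. path_weight k m p \<omega> * path_weight k m q \<omega>)"
  unfolding escape_sum_def power2_eq_square by (simp add: sum_product)

lemma integrable_escape_sum_power2: "integrable M (\<lambda>\<omega>. escape_sum k m \<omega> ^ 2)"
  unfolding escape_sum_power2 using integrable_path_weight_mult by auto

lemma expectation_escape_sum:
  "expectation (escape_sum k m) = real d1 ^ k * real d ^ m * mgf \<beta> ^ Suc m"
proof -
  have "expectation (escape_sum k m) = (\<Sum>p\<in>escape_paths k m. expectation (path_weight k m p))"
    unfolding escape_sum_def[abs_def]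
    by (rule Bochner_Integration.integral_sum) (use integrable_path_weight in auto)
  also have "\<dots> = real d1 ^ k * real d ^ m * mgf \<beta> ^ Suc m"
    by (simp add: integral_path_weight card_escape_paths)
  finally show ?thesis .
qed

lemma variance_escape_sum_le:
  defines "\<rho> \<equiv> mgf (2 * \<beta>) / mgf \<beta> ^ 2"
  shows "variance (escape_sum k m)
    \<le> mgf \<beta> ^ (2 * Suc m) * (real d1 ^ k * \<rho> * overlap_sum d m \<rho>)"
proof -
  let ?L = "mgf \<beta>"
  let ?g = "\<lambda>p q. length (longest_common_prefix p q) - k"
  have \<rho>_pos: "0 < \<rho>"
    unfolding \<rho>_def using mgf_pos[of "2 * \<beta>"] mgf_pos[of \<beta>] by simp
  have "expectation (\<lambda>\<omega>. path_weight k m p \<omega> * path_weight k m q \<omega>)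
      = ?L ^ (2 * Suc m) * \<rho> ^ ?g p q"
    if "p \<in> escape_paths k m" "q \<in> escape_paths k m" for p q
  proof -
    have "?g p q \<le> Suc m"
      using length_lcp_le[of p q] escape_paths_subset[of k m] that by (auto simp: paths_def)
    then show ?thesis
      using integral_path_weight_mult[OF that] mgf_pos[of \<beta>]
        power_split_ratio[where L = "?L" and P = "mgf (2 * \<beta>)" and g = "?g p q" and M = "Suc m"]
      unfolding \<rho>_def by simp
  qed
  then have second_moment: "expectation (\<lambda>\<omega>. escape_sum k m \<omega> ^ 2)
      = (\<Sum>p\<in>escape_paths k m. \<Sum>q\<in>escape_paths k m. ?L ^ (2 * Suc m) * \<rho> ^ ?g p q)"
    unfolding escape_sum_power2 using integrable_path_weight_mult by (simp add: integrable_sum)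
  have first_moment_sq: "(expectation (escape_sum k m))\<^sup>2
      = (\<Sum>p\<in>escape_paths k m. \<Sum>q\<in>escape_paths k m. ?L ^ (2 * Suc m))"
    by (simp add: expectation_escape_sum card_escape_paths power2_eq_square power_mult_distrib
        power_mult algebra_simps)
  have "variance (escape_sum k m)
      = expectation (\<lambda>\<omega>. escape_sum k m \<omega> ^ 2) - (expectation (escape_sum k m))\<^sup>2"
    by (rule variance_eq[OF integrable_escape_sum integrable_escape_sum_power2])
  also have "\<dots> = ?L ^ (2 * Suc m) * (\<Sum>p\<in>escape_paths k m. \<Sum>q\<in>escape_paths k m. \<rho> ^ ?g p q - 1)"
    unfolding second_moment first_moment_sq
    by (simp add: sum_subtractf sum_distrib_left right_diff_distrib)
  also have "\<dots> \<le> ?L ^ (2 * Suc m) * (real d1 ^ k * \<rho> * overlap_sum d m \<rho>)"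
    using escape_overlap_sum_le[of \<rho>] \<rho>_pos mgf_pos[of \<beta>] by (intro mult_left_mono) simp_all
  finally show ?thesis .
qed

lemma prob_escape_sum_le_half_mean:
  defines "\<rho> \<equiv> mgf (2 * \<beta>) / mgf \<beta> ^ 2"
  shows "prob {\<omega> \<in> space M. escape_sum k m \<omega> \<le> expectation (escape_sum k m) / 2}
    \<le> 4 * \<rho> * real (Suc m) * (max (real d * \<rho>) (real d ^ 2) / real d ^ 2) ^ m / real d1 ^ k"
proof -
  let ?L = "mgf \<beta>" and ?\<mu> = "expectation (escape_sum k m)"
  have pos: "0 < ?L" "0 < \<rho>" "0 < real d" "0 < real d1"
    using mgf_pos[of \<beta>] mgf_pos[of "2 * \<beta>"] d_ge_2 d1_pos by (auto simp: \<rho>_def)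
  have \<mu>: "?\<mu> = real d1 ^ k * real d ^ m * ?L ^ Suc m"
    by (rule expectation_escape_sum)
  have "prob {\<omega> \<in> space M. escape_sum k m \<omega> \<le> ?\<mu> / 2}
      \<le> prob {\<omega> \<in> space M. ?\<mu> / 2 \<le> \<bar>escape_sum k m \<omega> - ?\<mu>\<bar>}"
    by (rule finite_measure_mono) (auto simp: abs_if)
  also have "\<dots> \<le> variance (escape_sum k m) / (?\<mu> / 2)\<^sup>2"
    using integrable_escape_sum_power2 pos by (intro Chebyshev_inequality) (auto simp: \<mu>)
  also have "\<dots> \<le> ?L ^ (2 * Suc m) * (real d1 ^ k * \<rho> * overlap_sum d m \<rho>) / (?\<mu> / 2)\<^sup>2"
    using variance_escape_sum_le[of k m] unfolding \<rho>_def by (intro divide_right_mono) auto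
  also have "\<dots> = 4 * \<rho> * overlap_sum d m \<rho> / (real d1 ^ k * (real d ^ 2) ^ m)"
    unfolding \<mu> using pos power_add[of ?L m m, symmetric]
    by (simp add: mult_2_right power2_eq_square power_mult_distrib power_mult[symmetric] field_simps)
  also have "\<dots> \<le> 4 * \<rho> * (real (Suc m) * max (real d * \<rho>) (real d ^ 2) ^ m)
      / (real d1 ^ k * (real d ^ 2) ^ m)"
    using overlap_sum_le[of \<rho> d m] pos by (intro divide_right_mono mult_left_mono) auto
  also have "\<dots> = 4 * \<rho> * real (Suc m) * (max (real d * \<rho>) (real d ^ 2) / real d ^ 2) ^ m / real d1 ^ k"
    using pos by (simp add: power_divide field_simps)
  finally show ?thesis .
qed

lemma Z_ST_ge_escape_sum:
  "exp (\<beta> * u * real k) * escape_sum k m \<omega> \<le> Z_ST d d1 X \<beta> u (k + Suc m) \<omega>"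
proof -
  have "exp (\<beta> * (\<Sum>j\<in>{1..k + Suc m}. env d d1 u X (j, path_pos d (take j p)) \<omega>))
      = exp (\<beta> * u * real k) * path_weight k m p \<omega>"
    if p: "p \<in> escape_paths k m" for p
  proof -
    have "{1..k + Suc m} = {1..k} \<union> free_gens k m" "{1..k} \<inter> free_gens k m = {}"
      by (auto simp: free_gens_def)
    then have "(\<Sum>j\<in>{1..k + Suc m}. env d d1 u X (j, path_pos d (take j p)) \<omega>)
        = (\<Sum>j\<in>{1..k}. env d d1 u X (path_node p j) \<omega>)
          + (\<Sum>j\<in>free_gens k m. env d d1 u X (path_node p j) \<omega>)"
      unfolding path_node_def by (simp add: sum.union_disjoint free_gens_def)
    also have "\<dots> = real k * u + (\<Sum>j\<in>free_gens k m. X (path_node p j) \<omega>)"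
      using path_node_defect[OF p] path_node_disordered[OF p] by (simp add: env_def)
    finally show ?thesis
      unfolding path_weight_def by (simp add: exp_add[symmetric] algebra_simps)
  qed
  then have "exp (\<beta> * u * real k) * escape_sum k m \<omega>
      = (\<Sum>p\<in>escape_paths k m.
          exp (\<beta> * (\<Sum>j\<in>{1..k + Suc m}. env d d1 u X (j, path_pos d (take j p)) \<omega>)))"
    by (simp add: escape_sum_def sum_distrib_left)
  also have "\<dots> \<le> Z_ST d d1 X \<beta> u (k + Suc m) \<omega>"
    unfolding Z_ST_def by (rule sum_mono2[OF finite_paths escape_paths_subset]) auto
  finally show ?thesis .
qed

lemma ln_Z_ST_ge:
  assumes "expectation (escape_sum k m) / 2 < escape_sum k m \<omega>"
  shows "\<beta> * u * real k + real k * ln (real d1) + real m * ln (real d)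
      + real (Suc m) * ln (mgf \<beta>) - ln 2 \<le> ln (Z_ST d d1 X \<beta> u (k + Suc m) \<omega>)"
proof -
  let ?\<mu> = "real d1 ^ k * real d ^ m * mgf \<beta> ^ Suc m"
  have pos: "0 < real d1" "0 < real d" "0 < mgf \<beta>"
    using d1_pos d_ge_2 mgf_pos by auto
  have "exp (\<beta> * u * real k) * (?\<mu> / 2) \<le> Z_ST d d1 X \<beta> u (k + Suc m) \<omega>"
    using assms Z_ST_ge_escape_sum[of u k m \<omega>] expectation_escape_sum[of k m]
    by (smt (verit) exp_gt_zero mult_strict_left_mono)
  then have "ln (exp (\<beta> * u * real k) * (?\<mu> / 2)) \<le> ln (Z_ST d d1 X \<beta> u (k + Suc m) \<omega>)"
    using pos by (intro ln_mono) auto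
  then show ?thesis
    using pos by (simp add: ln_mult ln_div ln_realpow algebra_simps)
qed

lemma lam_eq_ln_mgf: "lam M V c = ln (mgf c)"
  by (simp add: lam_def mgf_def)

lemma Theta_div_eq:
  defines "\<rho> \<equiv> mgf (2 * \<beta>) / mgf \<beta> ^ 2"
  shows "Theta M V d \<beta> / ((real d)\<^sup>2 * exp (2 * lam M V \<beta>))
    = max (real d * \<rho>) ((real d)\<^sup>2) / (real d)\<^sup>2"
proof -
  let ?L = "mgf \<beta>"
  have exp_2lam: "exp (2 * lam M V \<beta>) = ?L\<^sup>2"
    using mgf_pos[of \<beta>] by (simp add: lam_eq_ln_mgf exp_of_nat_mult[of 2, simplified])
  have "Theta M V d \<beta> = max ((real d)\<^sup>2 * ?L\<^sup>2) (real d * mgf (2 * \<beta>))"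
    unfolding Theta_def exp_2lam using mgf_pos[of "2 * \<beta>"] by (simp add: lam_eq_ln_mgf)
  also have "\<dots> = ?L\<^sup>2 * max ((real d)\<^sup>2) (real d * \<rho>)"
    using mgf_pos[of \<beta>] by (simp add: \<rho>_def max_mult_distrib_left algebra_simps)
  finally have "Theta M V d \<beta> = ?L\<^sup>2 * max ((real d)\<^sup>2) (real d * \<rho>)" .
  then show ?thesis
    using mgf_pos[of \<beta>] by (simp add: exp_2lam max.commute)
qed

lemma AE_eventually_escape_sum_gt_half_mean:
  defines "\<rho> \<equiv> mgf (2 * \<beta>) / mgf \<beta> ^ 2"
  assumes split: "\<And>n. 1 \<le> n \<Longrightarrow> k n + Suc (m n) = n"
    and k_ge: "\<And>n. t * real n - 1 \<le> real (k n)"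
    and ratio: "(max (real d * \<rho>) (real d ^ 2) / real d ^ 2) powr (1 - t) < real d1 powr t"
  shows "AE \<omega> in M. \<forall>\<^sub>F n in sequentially.
    expectation (escape_sum (k n) (m n)) / 2 < escape_sum (k n) (m n) \<omega>"
proof -
  define r where "r = max (real d * \<rho>) (real d ^ 2) / real d ^ 2"
  define q where "q = r powr (1 - t) / real d1 powr t"
  define A where
    "A n = {\<omega> \<in> space M. escape_sum (k n) (m n) \<omega> \<le> expectation (escape_sum (k n) (m n)) / 2}" for n
  have \<rho>_pos: "0 < \<rho>"
    using mgf_pos[of \<beta>] mgf_pos[of "2 * \<beta>"] by (simp add: \<rho>_def)
  have r_ge: "1 \<le> r"
    using d_ge_2 by (simp add: r_def le_divide_eq)
  have q: "0 \<le> q" "q < 1"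
    using ratio[folded r_def] d1_pos by (simp_all add: q_def)
  have A_sets[measurable]: "A n \<in> sets M" for n
    unfolding A_def by measurable
  have bound: "measure M (A n) \<le> 4 * \<rho> * real d1 * (real n * q ^ n)" if "1 \<le> n" for n
  proof -
    have "measure M (A n) \<le> 4 * \<rho> * (real (Suc (m n)) * r ^ m n / real d1 ^ k n)"
      using prob_escape_sum_le_half_mean[of "k n" "m n"] unfolding A_def r_def \<rho>_def
      by (simp add: mult.assoc)
    also have "\<dots> \<le> 4 * \<rho> * (real d1 * (real n * q ^ n))"
      using escape_bound_le_geometric[OF r_ge _ split[OF that] k_ge, of "real d1"] d1_pos \<rho>_pos
      unfolding q_def by (intro mult_left_mono) auto
    finally show ?thesis
      by (simp add: mult.assoc)
  qed
  have "summable (\<lambda>n. measure M (A n))"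
  proof (rule summable_comparison_test')
    show "summable (\<lambda>n. 4 * \<rho> * real d1 * (real n * q ^ n))"
      using summable_of_nat_mult_power[OF q] by (rule summable_mult)
    show "norm (measure M (A n)) \<le> 4 * \<rho> * real d1 * (real n * q ^ n)" if "1 \<le> n" for n
      using bound[OF that] by simp
  qed
  then have "AE \<omega> in M. \<forall>\<^sub>F n in sequentially. \<omega> \<in> space M - A n"
    by (intro borel_cantelli_AE1) (simp_all add: emeasure_eq_measure)
  then show ?thesis
    by eventually_elim (auto simp: A_def elim: eventually_mono)
qed

lemma liminf_ln_Z_ST_ge:
  assumes split: "\<And>n. 1 \<le> n \<Longrightarrow> k n + Suc (m n) = n"
    and k_lim: "(\<lambda>n. real (k n) / real n) \<longlonglongrightarrow> t"
    and large: "\<forall>\<^sub>F n in sequentially.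
      expectation (escape_sum (k n) (m n)) / 2 < escape_sum (k n) (m n) \<omega>"
  shows "ereal ((ln (mgf \<beta>) + ln (real d)) * (1 - t) + (\<beta> * u + ln (real d1)) * t)
    \<le> liminf (\<lambda>n. ereal (ln (Z_ST d d1 X \<beta> u n \<omega>) / real n))"
proof -
  define lower where "lower n = real (k n) / real n * (\<beta> * u + ln (real d1))
    + (1 - real (k n) / real n) * (ln (mgf \<beta>) + ln (real d)) - (ln (real d) + ln 2) / real n" for n
  have "lower \<longlonglongrightarrow> t * (\<beta> * u + ln (real d1)) + (1 - t) * (ln (mgf \<beta>) + ln (real d)) - 0"
    unfolding lower_def by (intro tendsto_intros k_lim lim_const_over_n)
  then have "ereal ((ln (mgf \<beta>) + ln (real d)) * (1 - t) + (\<beta> * u + ln (real d1)) * t)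
      = liminf (\<lambda>n. ereal (lower n))"
    by (intro lim_imp_Liminf[symmetric]) (auto simp: algebra_simps)
  also have "\<dots> \<le> liminf (\<lambda>n. ereal (ln (Z_ST d d1 X \<beta> u n \<omega>) / real n))"
  proof (intro Liminf_mono)
    show "\<forall>\<^sub>F n in sequentially. ereal (lower n) \<le> ereal (ln (Z_ST d d1 X \<beta> u n \<omega>) / real n)"
      using large eventually_ge_at_top[of 1]
    proof eventually_elim
      case (elim n)
      have n_pos: "0 < real n"
        using elim by simp
      have n_eq: "real n = real (k n) + real (m n) + 1"
        using arg_cong[OF split[OF elim(2)], of real] by simp
      have "lower n * real n = real (k n) * (\<beta> * u + ln (real d1))
          + (real n - real (k n)) * (ln (mgf \<beta>) + ln (real d)) - (ln (real d) + ln 2)"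
        using n_pos unfolding lower_def by (simp add: field_simps)
      also have "\<dots> = \<beta> * u * real (k n) + real (k n) * ln (real d1) + real (m n) * ln (real d)
          + real (Suc (m n)) * ln (mgf \<beta>) - ln 2"
        unfolding n_eq by (simp add: algebra_simps)
      also have "\<dots> \<le> ln (Z_ST d d1 X \<beta> u n \<omega>)"
        using ln_Z_ST_ge[OF elim(1)] split[OF elim(2)] by simp
      finally show ?case
        using n_pos by (simp add: pos_le_divide_eq)
    qed
  qed
  finally show ?thesis .
qed

lemma AE_liminf_ln_Z_ST_ge:
  defines "\<rho> \<equiv> mgf (2 * \<beta>) / mgf \<beta> ^ 2"
  assumes split: "\<And>n. 1 \<le> n \<Longrightarrow> k n + Suc (m n) = n"
    and k_ge: "\<And>n. t * real n - 1 \<le> real (k n)"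
    and k_lim: "(\<lambda>n. real (k n) / real n) \<longlonglongrightarrow> t"
    and ratio: "(max (real d * \<rho>) (real d ^ 2) / real d ^ 2) powr (1 - t) < real d1 powr t"
  shows "AE \<omega> in M. ereal ((ln (mgf \<beta>) + ln (real d)) * (1 - t) + (\<beta> * u + ln (real d1)) * t)
    \<le> liminf (\<lambda>n. ereal (ln (Z_ST d d1 X \<beta> u n \<omega>) / real n))"
proof -
  have "AE \<omega> in M. \<forall>\<^sub>F n in sequentially.
      expectation (escape_sum (k n) (m n)) / 2 < escape_sum (k n) (m n) \<omega>"
    using AE_eventually_escape_sum_gt_half_mean[OF split k_ge] ratio
    unfolding \<rho>_def by blast
  then show ?thesis
    by eventually_elim (rule liminf_ln_Z_ST_ge[OF split k_lim])
qed

end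

theorem lemma2p10:
  fixes M :: "'a measure" and V :: "'a \<Rightarrow> real" and X :: "nat \<times> nat \<Rightarrow> 'a \<Rightarrow> real"
    and d d1 :: nat and \<beta> t u :: real
  assumes "prob_space M"
    and "d \<ge> 2" and "1 \<le> d1" and "d1 < d"
    and "V \<in> borel_measurable M"
    and "\<not> (\<exists>c. AE \<omega> in M. V \<omega> = c)"
    and "\<And>b. integrable M (\<lambda>\<omega>. exp (b * V \<omega>))"
    and "prob_space.indep_vars M (\<lambda>_. borel) X (dary_tree d - defect_tree d d1)"
    and "\<And>x. x \<in> dary_tree d - defect_tree d d1 \<Longrightarrow> distr M borel (X x) = distr M borel V"
    and "\<beta> > 0" and "0 < t" and "t < 1"
    and "(Theta M V d \<beta> / ((real d)^2 * exp (2 * lam M V \<beta>))) powr (1 - t) < real d1 powr t"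
  shows "AE \<omega> in M.
           liminf (\<lambda>n. ereal (ln (Z_ST d d1 X \<beta> u n \<omega>) / real n))
             \<ge> ereal ((lam M V \<beta> + ln (real d)) * (1 - t) + (\<beta> * u + ln (real d1)) * t)"
proof -
  have "defect_polymer M V X d d1"
    unfolding defect_polymer_def defect_polymer_axioms_def using assms by auto
  then interpret defect_polymer M V X d d1 \<beta> .
  define k where "k n = nat \<lfloor>t * real n\<rfloor>" for n
  define m where "m n = n - k n - 1" for n
  have k_ge: "t * real n - 1 \<le> real (k n)" for n
    unfolding k_def using assms(11) by linarith
  have split: "k n + Suc (m n) = n" if "1 \<le> n" for n
  proof -
    have "real (k n) \<le> t * real n"
      unfolding k_def using assms(11) by (simp add: of_nat_floor)
    also have "\<dots> < real n"
      using assms(12) that by simp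
    finally show ?thesis
      unfolding m_def by simp
  qed
  have k_lim: "(\<lambda>n. real (k n) / real n) \<longlonglongrightarrow> t"
    unfolding k_def using assms(11) by (intro LIMSEQ_nat_floor_mult_div) simp
  show ?thesis
    using AE_liminf_ln_Z_ST_ge[OF split k_ge k_lim assms(13)[unfolded Theta_div_eq]]
    by (simp only: lam_eq_ln_mgf)
qed

end
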